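(* Let $\beta\in\mathbb{K}$ and let $G_{\mathrm{cyc}}$ be the $q$-grammar with master variables $\{x,y,z,e\}$, rule $x_j\mapsto q^jy_jx_{j+1}$, $y_j\mapsto q^jy_jx_{j+1}$, $z_j\mapsto q^jy_jx_{j+1}$, $e_j\mapsto\beta q^je_jz_{j+1}$ ($j\ge0$), and order KSO (identity). Let $\phi$ be the evaluation $\phi(x_j)=x$, $\phi(y_j)=y$, $\phi(z_j)=z$, $\phi(e_j)=e$ (commuting indeterminates; values taken in rational functions over $\mathbb{K}$). Then, as formal power series in $u$, \[ \phi\big(\mathrm{Gen}^{(G_{\mathrm{cyc}})}_q(e_0;u)\big)=e\prod_{k=0}^{\infty}\frac{1}{1-\beta uq^k\,\phi\big(\mathrm{Gen}^{(G_{\mathrm{cyc}})}_q(z_1;uq^k)\big)}, \] where \[ \phi\big(\mathrm{Gen}^{(G_{\mathrm{cyc}})}_q(z_1;uq^k)\big)=\frac{z-y+x^{-1}y(x-z)\,e_q\big((x-y)uq^{k+1}\big)}{1-x^{-1}y\,e_q\big((x-y)uq^{k+1}\big)}. \]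
   Context: $\mathbb{K}$ is a commutative ring with unity and characteristic zero, $q$ an indeterminate. For a set $S$ of master variables, $\mathbb{S}=\{s_i:s\in S,\ i\ge0\}$ is a set of non-commuting variables, $F(\mathbb{S})$ the free group on $\mathbb{S}$, $\mathbb{E}=\mathbb{K}[q][F(\mathbb{S})]$ its group algebra. A rule $R$ assigns to each $s_i$ an element of $\mathbb{E}$, extended by $R(s_i^{-1})=-s_i^{-1}R(s_i)s_{i+1}^{-1}$. The up-arrow $\uparrow$ is the linear map replacing each letter $s_i^{\pm1}$ by $s_{i+1}^{\pm1}$. The $q$-derivative of a $q$-grammar $(S,R,\rho)$ ($\rho$ an order, i.e. a letter-permuting rewriting of words; KSO is the identity) is the $\mathbb{K}[q]$-linear map with $D(w_1\cdots w_n)=\sum_{j=1}^n\rho\big(w_1\cdots w_{j-1}R(w_j)\uparrow(w_{j+1}\cdots w_n)\big)$ for letters $w_j\in\mathbb{S}\cup\mathbb{S}^{-1}$, $D^0=\mathrm{id}$, $D^k=D\circ D^{k-1}$. An evaluation extends to a $\mathbb{K}[q]$-linear ring morphism with $\phi(s_i^{-1})=\phi(s_i)^{-1}$. $\mathrm{Gen}^{(G)}_q(f;u)=\sum_{n\ge0}D^n(f)u^n/(q;q)_n$, $(q;q)_n=\prod_{i=1}^n(1-q^i)$, $\phi$ applied coefficientwise; $e_q(u)=\sum_{n\ge0}u^n/(q;q)_n$. *)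

theory Defs
  imports "HOL-Computational_Algebra.Formal_Power_Series"
          "HOL-Computational_Algebra.Polynomial_FPS"
          "HOL-Computational_Algebra.Fraction_Field"
begin

datatype mvar = MX | MY | MZ | ME

text \<open>A letter is (s, i, inv): inv = False means s_i, inv = True means s_i^{-1}.\<close>
type_synonym letter = "mvar \<times> nat \<times> bool"

text \<open>Elements of the algebra are represented as formal K[q]-linear combinations of
  words in the letters (lists of coefficient/word pairs).\<close>
type_synonym 'k elt = "('k poly \<times> letter list) list"

definition elt_mult :: "'k::comm_ring_1 elt \<Rightarrow> 'k elt \<Rightarrow> 'k elt" where
  "elt_mult a b = [(c * d, v @ w). (c, v) \<leftarrow> a, (d, w) \<leftarrow> b]"

definition word_elt :: "letter list \<Rightarrow> 'k::comm_ring_1 elt" where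
  "word_elt w = [(1, w)]"

fun up_letter :: "letter \<Rightarrow> letter" where
  "up_letter (s, i, b) = (s, Suc i, b)"

fun letter_rule :: "(mvar \<Rightarrow> nat \<Rightarrow> 'k::comm_ring_1 elt) \<Rightarrow> letter \<Rightarrow> 'k elt" where
  "letter_rule r (s, i, False) = r s i"
| "letter_rule r (s, i, True) =
     elt_mult (elt_mult [(-1, [(s, i, True)])] (r s i)) (word_elt [(s, Suc i, True)])"

text \<open>q-derivative (order KSO = identity) of a single word.\<close>
definition D_word :: "(mvar \<Rightarrow> nat \<Rightarrow> 'k::comm_ring_1 elt) \<Rightarrow> letter list \<Rightarrow> 'k elt" where
  "D_word r w = concat (map (\<lambda>j. elt_mult (elt_mult (word_elt (take j w)) (letter_rule r (w ! j)))
                                      (word_elt (map up_letter (drop (Suc j) w))))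
                            [0..<length w])"

definition qD :: "(mvar \<Rightarrow> nat \<Rightarrow> 'k::comm_ring_1 elt) \<Rightarrow> 'k elt \<Rightarrow> 'k elt" where
  "qD r a = concat (map (\<lambda>(c, w). map (\<lambda>(d, v). (c * d, v)) (D_word r w)) a)"

definition cyc_rule :: "'k::comm_ring_1 \<Rightarrow> mvar \<Rightarrow> nat \<Rightarrow> 'k elt" where
  "cyc_rule \<beta> s j = (case s of
       ME \<Rightarrow> [(monom \<beta> j, [(ME, j, False), (MZ, Suc j, False)])]
     | _ \<Rightarrow> [(monom 1 j, [(MY, j, False), (MX, Suc j, False)])])"

type_synonym 'k ratfun = "'k poly poly poly poly fract"

definition rf_const :: "'k::idom \<Rightarrow> 'k ratfun" where
  "rf_const c = Fract [:[:[:[:c:]:]:]:] 1"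

definition rf_x :: "'k::idom ratfun" where "rf_x = Fract [:0, 1:] 1"
definition rf_y :: "'k::idom ratfun" where "rf_y = Fract [:[:0, 1:]:] 1"
definition rf_z :: "'k::idom ratfun" where "rf_z = Fract [:[:[:0, 1:]:]:] 1"
definition rf_e :: "'k::idom ratfun" where "rf_e = Fract [:[:[:[:0, 1:]:]:]:] 1"

definition cyc_val :: "mvar \<Rightarrow> 'k::idom ratfun" where
  "cyc_val s = (case s of MX \<Rightarrow> rf_x | MY \<Rightarrow> rf_y | MZ \<Rightarrow> rf_z | ME \<Rightarrow> rf_e)"

text \<open>Evaluation \<phi>: K[q]-linear ring morphism, q \<mapsto> q (the fps variable),
  s_i \<mapsto> value of s, s_i^{-1} \<mapsto> its inverse.\<close>
definition phi :: "'k::idom elt \<Rightarrow> 'k ratfun fps" where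
  "phi a = (\<Sum>(c, w) \<leftarrow> a. fps_of_poly (map_poly rf_const c) *
              (\<Prod>(s, i, b) \<leftarrow> w. fps_const (if b then inverse (cyc_val s) else cyc_val s)))"

definition qpoch :: "nat \<Rightarrow> 'a::comm_ring_1 fps" where
  "qpoch n = (\<Prod>i\<in>{1..n}. 1 - fps_X ^ i)"

text \<open>\<phi>(Gen_q(f; c u)) as a power series in u whose coefficients are power series in q:
  coefficient of u^n is \<phi>(D^n f) c^n / (q;q)_n.\<close>
definition gen_phi :: "'k::idom \<Rightarrow> 'k elt \<Rightarrow> 'k ratfun fps \<Rightarrow> 'k ratfun fps fps" where
  "gen_phi \<beta> f c = Abs_fps (\<lambda>n. phi ((qD (cyc_rule \<beta>) ^^ n) f) * c ^ n * inverse (qpoch n))"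

definition eq_exp :: "'a::field fps \<Rightarrow> 'a fps fps" where
  "eq_exp a = Abs_fps (\<lambda>n. a ^ n * inverse (qpoch n))"

end

theory Submission
  imports Defs
begin

(* For a word w without inverse letters, Gen(w)(u) = sum_n phi(D^n w) u^n / (q;q)_n is
   multiplicative under concatenation, turns the index shift into the dilation u -> q u, and
   satisfies the q-difference equation Gen(w)(u) - Gen(w)(q u) = u Gen(D w)(u).  For the letter x_0
   this is the Riccati-type equation W(u) - W(q u) = u (W(u) - (x - y)) W(q u), whose unique
   solution with W(0) = x is (x - y) / (1 - (y/x) e_q((x - y) u)); the series of y_0 and z_1 differ
   from W and from W(q u) only by constants.  For e_0 the equation says
   E(q u) = E(u) (1 - beta u Gen(z_1)(u)); iterating it writes E(u) as E(q^N u) times a finite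
   product, and E(q^N u) agrees with its constant term e modulo q^N. *)

unbundle fps_syntax

section \<open>Linearity of the q-derivative and of the evaluation\<close>

definition elt_scale :: "'k::comm_ring_1 poly \<Rightarrow> 'k elt \<Rightarrow> 'k elt" where
  "elt_scale c a = map (\<lambda>(d, v). (c * d, v)) a"

lemma elt_scale_1 [simp]: "elt_scale 1 a = a"
  by (simp add: elt_scale_def case_prod_beta)

lemma qD_Nil [simp]: "qD r [] = []"
  by (simp add: qD_def)

lemma qD_append: "qD r (a @ b) = qD r a @ qD r b"
  by (simp add: qD_def)

lemma qD_single: "qD r [(c, w)] = elt_scale c (D_word r w)"
  by (simp add: qD_def elt_scale_def)

lemma qD_elt_scale: "qD r (elt_scale c a) = elt_scale c (qD r a)"
  unfolding qD_def elt_scale_def by (induction a) (auto simp: mult.assoc case_prod_beta)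

lemma qD_power_Nil [simp]: "(qD r ^^ n) [] = []"
  by (induction n) simp_all

lemma qD_power_append: "(qD r ^^ n) (a @ b) = (qD r ^^ n) a @ (qD r ^^ n) b"
  by (induction n) (simp_all add: qD_append)

lemma qD_power_elt_scale: "(qD r ^^ n) (elt_scale c a) = elt_scale c ((qD r ^^ n) a)"
  by (induction n) (simp_all add: qD_elt_scale)

lemma map_poly_mult_hom:
  fixes f :: "'a::comm_semiring_0 \<Rightarrow> 'b::comm_semiring_0"
  assumes "f 0 = 0" and "\<And>a b. f (a + b) = f a + f b" and "\<And>a b. f (a * b) = f a * f b"
  shows "map_poly f (p * q) = map_poly f p * map_poly f q"
proof (induction p)
  case (pCons a p)
  have "map_poly f (smult a q + pCons 0 (p * q)) =
      map_poly f (smult a q) + map_poly f (pCons 0 (p * q))"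
    by (intro poly_eqI) (simp add: coeff_map_poly assms)
  then show ?case
    by (simp add: mult_pCons_left map_poly_smult map_poly_pCons assms pCons.IH)
qed (simp add: assms)

lemma rf_const_0 [simp]: "rf_const 0 = 0"
  by (simp add: rf_const_def Zero_fract_def eq_fract)

lemma rf_const_1 [simp]: "rf_const 1 = 1"
  by (simp add: rf_const_def One_fract_def pCons_one)

lemma rf_const_add: "rf_const (a + b) = rf_const a + rf_const b"
  by (simp add: rf_const_def)

lemma rf_const_mult: "rf_const (a * b) = rf_const a * rf_const b"
  by (simp add: rf_const_def)

definition phi_coeff :: "'k::idom poly \<Rightarrow> 'k ratfun fps" where
  "phi_coeff c = fps_of_poly (map_poly rf_const c)"

lemma phi_coeff_1 [simp]: "phi_coeff 1 = 1"
  by (simp add: phi_coeff_def)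

lemma phi_coeff_mult: "phi_coeff (c * d) = phi_coeff c * phi_coeff d"
  by (simp add: phi_coeff_def map_poly_mult_hom rf_const_add rf_const_mult fps_of_poly_mult)

lemma phi_coeff_monom: "phi_coeff (monom c i) = fps_const (rf_const c) * fps_X ^ i"
  by (simp add: phi_coeff_def map_poly_monom fps_of_poly_monom)

lemma phi_Nil [simp]: "phi [] = 0"
  by (simp add: phi_def)

lemma phi_append: "phi (a @ b) = phi a + phi b"
  by (simp add: phi_def)

lemma phi_Cons:
  "phi ((c, w) # a) =
     phi_coeff c * (\<Prod>(s, i, b)\<leftarrow>w. fps_const (if b then inverse (cyc_val s) else cyc_val s)) + phi a"
  by (simp add: phi_def phi_coeff_def)

lemma phi_elt_scale: "phi (elt_scale c a) = phi_coeff c * phi a"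
  by (induction a) (auto simp: elt_scale_def phi_Cons phi_coeff_mult algebra_simps)

lemma phi_single_append: "phi [(1, v @ w)] = phi [(1, v)] * phi [(1, w)]"
  by (simp add: phi_def)

lemma phi_single_up: "phi [(1, map up_letter w)] = phi [(1, w)]"
  by (induction w) (auto simp: phi_def)

lemma phi_single_letter: "phi [(1, [(s, i, False)])] = fps_const (cyc_val s)"
  by (simp add: phi_def)

lemma phi_qD_power:
  "phi ((qD r ^^ n) a) = (\<Sum>(c, w)\<leftarrow>a. phi_coeff c * phi ((qD r ^^ n) [(1, w)]))"
proof (induction a)
  case (Cons p a)
  obtain c w where p: "p = (c, w)" by (cases p)
  have "p # a = elt_scale c [(1, w)] @ a"
    by (simp add: p elt_scale_def)
  then have "phi ((qD r ^^ n) (p # a)) =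
      phi_coeff c * phi ((qD r ^^ n) [(1, w)]) + phi ((qD r ^^ n) a)"
    by (simp only: qD_power_append qD_power_elt_scale phi_append phi_elt_scale)
  with Cons.IH show ?case
    by (simp add: p)
qed simp

section \<open>The q-derivative on words without inverse letters\<close>

definition positive_word :: "letter list \<Rightarrow> bool" where
  "positive_word w \<longleftrightarrow> (\<forall>s i b. (s, i, b) \<in> set w \<longrightarrow> \<not> b)"

fun rule_coeff :: "'k::comm_ring_1 \<Rightarrow> letter \<Rightarrow> 'k poly" where
  "rule_coeff \<beta> (ME, i, _) = monom \<beta> i"
| "rule_coeff \<beta> (_, i, _) = monom 1 i"

fun rule_word :: "letter \<Rightarrow> letter list" where
  "rule_word (ME, i, _) = [(ME, i, False), (MZ, Suc i, False)]"
| "rule_word (_, i, _) = [(MY, i, False), (MX, Suc i, False)]"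

definition derive_at :: "letter list \<Rightarrow> nat \<Rightarrow> letter list" where
  "derive_at w j = take j w @ rule_word (w ! j) @ map up_letter (drop (Suc j) w)"

lemma cyc_rule_conv: "cyc_rule \<beta> s i = [(rule_coeff \<beta> (s, i, False), rule_word (s, i, False))]"
  by (cases s) (simp_all add: cyc_rule_def)

lemma D_word_cyc_positive:
  assumes "positive_word w"
  shows "D_word (cyc_rule \<beta>) w = map (\<lambda>j. (rule_coeff \<beta> (w ! j), derive_at w j)) [0..<length w]"
proof -
  have "letter_rule (cyc_rule \<beta>) (w ! j) = [(rule_coeff \<beta> (w ! j), rule_word (w ! j))]"
    if j: "j < length w" for j
  proof -
    obtain s i where "w ! j = (s, i, False)"
      using assms nth_mem[OF j] unfolding positive_word_def by (metis prod_cases3)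
    then show ?thesis by (simp add: cyc_rule_conv)
  qed
  then have "D_word (cyc_rule \<beta>) w =
      concat (map (\<lambda>j. [(rule_coeff \<beta> (w ! j), derive_at w j)]) [0..<length w])"
    unfolding D_word_def
    by (intro arg_cong[where f = concat] map_cong)
      (simp_all add: elt_mult_def word_elt_def derive_at_def)
  then show ?thesis
    by (simp add: concat_map_singleton)
qed

lemma positive_word_append [simp]: "positive_word (v @ w) \<longleftrightarrow> positive_word v \<and> positive_word w"
  unfolding positive_word_def by auto blast+

lemma positive_word_up [simp]: "positive_word (map up_letter w) \<longleftrightarrow> positive_word w"
  unfolding positive_word_def by (force simp: up_letter.simps)

lemma positive_word_letter [simp]: "positive_word [(s, i, False)]"
  by (simp add: positive_word_def)

lemma positive_rule_word [simp]: "positive_word (rule_word l)"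
  by (induction l rule: rule_word.induct) (simp_all add: positive_word_def)

lemma positive_word_derive_at: "positive_word w \<Longrightarrow> positive_word (derive_at w j)"
  unfolding derive_at_def
  by (metis append_take_drop_id positive_word_append positive_word_up positive_rule_word)

lemma phi_coeff_rule_coeff_up:
  "phi_coeff (rule_coeff \<beta> (up_letter l)) = fps_X * phi_coeff (rule_coeff \<beta> l)"
proof -
  obtain s i b where "l = (s, i, b)"
    by (cases l)
  then show ?thesis
    by (cases s) (simp_all add: phi_coeff_monom)
qed

lemma rule_word_up: "rule_word (up_letter l) = map up_letter (rule_word l)"
  by (induction l rule: rule_word.induct) simp_all

lemma derive_at_up: "j < length w \<Longrightarrow> derive_at (map up_letter w) j = map up_letter (derive_at w j)"
  by (simp add: derive_at_def take_map drop_map rule_word_up)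

lemma derive_at_append_left: "j < length v \<Longrightarrow> derive_at (v @ w) j = derive_at v j @ map up_letter w"
  by (simp add: derive_at_def nth_append)

lemma derive_at_append_right: "derive_at (v @ w) (length v + j) = v @ derive_at w j"
  by (simp add: derive_at_def nth_append)

definition phi_D :: "'k::idom \<Rightarrow> nat \<Rightarrow> letter list \<Rightarrow> 'k ratfun fps" where
  "phi_D \<beta> n w = phi ((qD (cyc_rule \<beta>) ^^ n) [(1, w)])"

lemma phi_D_0: "phi_D \<beta> 0 w = phi [(1, w)]"
  by (simp add: phi_D_def)

lemma phi_D_Suc:
  assumes "positive_word w"
  shows "phi_D \<beta> (Suc n) w =
    (\<Sum>j<length w. phi_coeff (rule_coeff \<beta> (w ! j)) * phi_D \<beta> n (derive_at w j))"
proof -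
  have "phi_D \<beta> (Suc n) w =
      phi ((qD (cyc_rule \<beta>) ^^ n) (map (\<lambda>j. (rule_coeff \<beta> (w ! j), derive_at w j)) [0..<length w]))"
    unfolding phi_D_def funpow_Suc_right o_apply
    by (simp add: qD_single D_word_cyc_positive[OF assms])
  also have "\<dots> = (\<Sum>j\<leftarrow>[0..<length w]. phi_coeff (rule_coeff \<beta> (w ! j)) * phi_D \<beta> n (derive_at w j))"
    by (subst phi_qD_power) (simp add: phi_D_def o_def)
  finally show ?thesis
    by (simp add: sum_list_distinct_conv_sum_set atLeast0LessThan)
qed

lemma phi_D_up:
  "positive_word w \<Longrightarrow> phi_D \<beta> n (map up_letter w) = fps_X ^ n * phi_D \<beta> n w"
proof (induction n arbitrary: w)
  case 0
  then show ?case by (simp add: phi_D_0 phi_single_up)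
next
  case (Suc n)
  have "phi_D \<beta> (Suc n) (map up_letter w) =
      (\<Sum>j<length w.
         fps_X * phi_coeff (rule_coeff \<beta> (w ! j)) * (fps_X ^ n * phi_D \<beta> n (derive_at w j)))"
    using Suc by (simp add: phi_D_Suc phi_coeff_rule_coeff_up derive_at_up positive_word_derive_at)
  also have "\<dots> = fps_X ^ Suc n * phi_D \<beta> (Suc n) w"
    by (simp add: phi_D_Suc[OF Suc.prems] sum_distrib_left algebra_simps)
  finally show ?case .
qed

section \<open>Dilation of the generating variable\<close>

definition fps_dilate :: "'a::comm_ring_1 \<Rightarrow> 'a fps \<Rightarrow> 'a fps" where
  "fps_dilate c f = Abs_fps (\<lambda>n. c ^ n * f $ n)"

lemma fps_dilate_nth [simp]: "fps_dilate c f $ n = c ^ n * f $ n"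
  by (simp add: fps_dilate_def)

lemma fps_dilate_conv_compose: "fps_dilate c f = f oo (fps_const c * fps_X)"
  by (simp add: fps_dilate_def fps_compose_linear)

lemma fps_dilate_mult: "fps_dilate (c :: 'a::idom) (f * g) = fps_dilate c f * fps_dilate c g"
  by (simp add: fps_dilate_conv_compose fps_compose_mult_distrib)

lemma fps_dilate_add [simp]: "fps_dilate c (f + g) = fps_dilate c f + fps_dilate c g"
  by (rule fps_ext) (simp add: algebra_simps)

lemma fps_dilate_diff [simp]: "fps_dilate c (f - g) = fps_dilate c f - fps_dilate c g"
  by (rule fps_ext) (simp add: algebra_simps)

lemma fps_dilate_const [simp]: "fps_dilate c (fps_const a) = fps_const a"
  by (rule fps_ext) simp

lemma fps_dilate_one [simp]: "fps_dilate c 1 = 1"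
  by (rule fps_ext) simp

lemma fps_dilate_fps_X [simp]: "fps_dilate c fps_X = fps_const c * fps_X"
  by (rule fps_ext) (simp add: fps_X_def)

lemma fps_dilate_by_1 [simp]: "fps_dilate 1 f = f"
  by (rule fps_ext) simp

lemma fps_dilate_dilate: "fps_dilate a (fps_dilate b f) = fps_dilate (a * b) f"
  by (rule fps_ext) (simp add: power_mult_distrib mult.assoc)

lemma fps_q_difference_nth: "(f - fps_dilate c f) $ n = (1 - c ^ n) * f $ n"
  by (simp add: algebra_simps)

lemma one_minus_fps_X_power_neq_0: "n > 0 \<Longrightarrow> 1 - fps_X ^ n \<noteq> (0 :: 'a::comm_ring_1 fps)"
  by (metis diff_zero fps_X_power_nth fps_one_nth less_not_refl2 one_neq_zero fps_sub_nth
      fps_zero_nth)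

lemma fps_fps_mult_inverse:
  fixes f :: "'a::field fps fps"
  assumes "f $ 0 $ 0 \<noteq> 0"
  shows "f * inverse f = 1"
proof -
  have "f $ 0 * inverse (f $ 0) = 1"
    using assms by (rule inverse_mult_eq_1')
  then show ?thesis
    using fps_right_inverse by (simp add: fps_inverse_def)
qed

lemma fps_fps_inverse_unique:
  fixes f g :: "'a::field fps fps"
  assumes fg: "f * g = 1"
  shows "inverse f = g"
proof -
  have "f $ 0 * g $ 0 = 1"
    using fg fps_mult_nth_0[of f g] by simp
  then have "f $ 0 $ 0 * g $ 0 $ 0 = 1"
    using fps_mult_nth_0[of "f $ 0" "g $ 0"] by simp
  then have "f * inverse f = 1"
    by (intro fps_fps_mult_inverse) auto
  then have "inverse f = inverse f * (f * g)"
    using fg by simp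
  also have "\<dots> = g"
    using \<open>f * inverse f = 1\<close> by (simp add: algebra_simps)
  finally show ?thesis .
qed

lemma fps_dilate_inverse:
  fixes f :: "'a::field fps fps"
  assumes "f $ 0 $ 0 \<noteq> 0"
  shows "fps_dilate c (inverse f) = inverse (fps_dilate c f)"
proof -
  have "fps_dilate c f * fps_dilate c (inverse f) = 1"
    by (simp flip: fps_dilate_mult add: fps_fps_mult_inverse[OF assms])
  then show ?thesis
    by (rule fps_fps_inverse_unique[symmetric])
qed

lemma q_difference_unique:
  fixes F G :: "'a::idom fps fps" and \<Phi> :: "'a fps fps \<Rightarrow> 'a fps fps"
  assumes causal: "\<And>F G n. (\<And>k. k \<le> n \<Longrightarrow> F $ k = G $ k) \<Longrightarrow> \<Phi> F $ n = \<Phi> G $ n"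
    and F: "F - fps_dilate fps_X F = fps_X * \<Phi> F"
    and G: "G - fps_dilate fps_X G = fps_X * \<Phi> G"
    and "F $ 0 = G $ 0"
  shows "F = G"
proof -
  have "\<forall>k\<le>n. F $ k = G $ k" for n
  proof (induction n)
    case (Suc n)
    have "(1 - fps_X ^ Suc n) * F $ Suc n = \<Phi> F $ n"
      using arg_cong[OF F, of "\<lambda>h. h $ Suc n"] by (simp only: fps_q_difference_nth) simp
    also have "\<dots> = \<Phi> G $ n"
      using Suc.IH by (intro causal) simp
    also have "\<dots> = (1 - fps_X ^ Suc n) * G $ Suc n"
      using arg_cong[OF G, of "\<lambda>h. h $ Suc n"] by (simp only: fps_q_difference_nth) simp
    finally have "F $ Suc n = G $ Suc n"
      using one_minus_fps_X_power_neq_0[of "Suc n"] by simp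
    with Suc.IH show ?case
      using le_Suc_eq by auto
  qed (simp add: assms(4))
  then show ?thesis
    by (auto intro: fps_ext)
qed

lemma q_difference_eq_0_imp_const:
  fixes F :: "'a::idom fps fps"
  assumes "F - fps_dilate fps_X F = 0"
  shows "F = fps_const (F $ 0)"
  by (rule q_difference_unique[where \<Phi> = "\<lambda>_. 0"]) (simp_all add: assms)

lemma tendsto_fps_nth_dilate_factorization:
  fixes F :: "'a::comm_ring_1 fps fps" and P :: "nat \<Rightarrow> 'a fps fps"
  assumes factor: "\<And>N. F = fps_dilate (fps_X ^ N) F * P N"
  shows "(\<lambda>N. (fps_const (F $ 0) * P N) $ n) \<longlonglongrightarrow> F $ n"
proof (rule tendsto_fpsI)
  fix m
  show "\<forall>\<^sub>F N in sequentially. (fps_const (F $ 0) * P N) $ n $ m = F $ n $ m"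
  proof (rule eventually_sequentiallyI[of "Suc m"])
    fix N assume "Suc m \<le> N"
    \<comment> \<open>The dilation by q^N agrees with the constant term of F modulo q^N.\<close>
    have "(fps_dilate (fps_X ^ N) F - fps_const (F $ 0)) $ i =
        fps_X ^ N * (if i = 0 then 0 else (fps_X ^ N) ^ (i - 1) * F $ i)" for i
      by (cases i) (simp_all add: mult.assoc)
    moreover have "F - fps_const (F $ 0) * P N =
        (fps_dilate (fps_X ^ N) F - fps_const (F $ 0)) * P N"
      using factor[of N] by (metis left_diff_distrib)
    ultimately have "(F - fps_const (F $ 0) * P N) $ n =
        fps_X ^ N * (\<Sum>i=0..n. (if i = 0 then 0 else (fps_X ^ N) ^ (i - 1) * F $ i) * P N $ (n - i))"
      by (simp only: fps_mult_nth sum_distrib_left mult.assoc)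
    then have "(F - fps_const (F $ 0) * P N) $ n $ m = 0"
      using \<open>Suc m \<le> N\<close> by (simp add: fps_X_power_mult_nth)
    then show "(fps_const (F $ 0) * P N) $ n $ m = F $ n $ m"
      by simp
  qed
qed

section \<open>The q-exponential\<close>

lemma qpoch_Suc: "qpoch (Suc n) = qpoch n * (1 - fps_X ^ Suc n)"
  by (simp add: qpoch_def prod.nat_ivl_Suc')

lemma inverse_qpoch_Suc:
  "(1 - fps_X ^ Suc n) * inverse (qpoch (Suc n)) = inverse (qpoch n :: 'a::field fps)"
  by (simp add: qpoch_Suc fps_inverse_mult inverse_mult_eq_1' mult.left_commute)

lemma eq_exp_nth: "eq_exp a $ n = a ^ n * inverse (qpoch n)"
  by (simp add: eq_exp_def)

lemma eq_exp_nth_0 [simp]: "eq_exp a $ 0 = 1"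
  by (simp add: eq_exp_nth qpoch_def)

lemma fps_dilate_eq_exp: "fps_dilate c (eq_exp a) = eq_exp (a * c)"
  by (rule fps_ext) (simp add: eq_exp_nth power_mult_distrib mult_ac)

lemma eq_exp_q_difference:
  "eq_exp a - fps_dilate fps_X (eq_exp a) = fps_X * fps_const a * eq_exp (a :: 'a::field fps)"
proof (rule fps_ext)
  fix n
  show "(eq_exp a - fps_dilate fps_X (eq_exp a)) $ n = (fps_X * fps_const a * eq_exp a) $ n"
  proof (cases n)
    case (Suc m)
    have "(eq_exp a - fps_dilate fps_X (eq_exp a)) $ n =
        a ^ Suc m * ((1 - fps_X ^ Suc m) * inverse (qpoch (Suc m)))"
      by (simp only: fps_q_difference_nth eq_exp_nth Suc mult.left_commute)
    also have "\<dots> = a * eq_exp a $ m"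
      by (simp only: inverse_qpoch_Suc) (simp only: eq_exp_nth power_Suc mult.assoc)
    finally show ?thesis
      by (simp add: Suc mult.assoc)
  qed simp
qed

lemma eq_exp_riccati:
  fixes c r :: "'a::field"
  assumes "r \<noteq> 1"
  defines "W \<equiv>
    fps_const (fps_const c) * inverse (1 - fps_const (fps_const r) * eq_exp (fps_const c))"
  shows "W - fps_dilate fps_X W = fps_X * ((W - fps_const (fps_const c)) * fps_dilate fps_X W)"
    and "W $ 0 = fps_const (c / (1 - r))"
proof -
  define C :: "'a fps fps" where "C = fps_const (fps_const c)"
  define R :: "'a fps fps" where "R = fps_const (fps_const r)"
  define E where "E = eq_exp (fps_const c)"
  define P where "P = 1 - R * E"
  define SP where "SP = fps_dilate fps_X P"
  have P0: "P $ 0 $ 0 \<noteq> 0" and SP0: "SP $ 0 $ 0 \<noteq> 0"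
    using assms by (simp_all add: P_def SP_def R_def E_def)
  have iP: "inverse P * P = 1" and iSP: "inverse SP * SP = 1"
    using fps_fps_mult_inverse[OF P0] fps_fps_mult_inverse[OF SP0] by (simp_all add: mult.commute)
  have W: "W = C * inverse P" and SW: "fps_dilate fps_X W = C * inverse SP"
    using fps_dilate_inverse[OF P0[unfolded P_def R_def E_def]]
    by (simp_all add: W_def C_def P_def SP_def R_def E_def fps_dilate_mult)
  have "SP - P = R * (E - fps_dilate fps_X E)"
    by (simp add: SP_def P_def R_def fps_dilate_mult algebra_simps)
  also have "\<dots> = fps_X * C * (1 - P)"
    by (simp add: E_def C_def P_def eq_exp_q_difference mult_ac)
  finally have "SP - P = fps_X * C * (1 - P)" .
  have "C * inverse P - C * inverse SP = C * inverse P * inverse SP * (SP - P)"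
    by (simp add: right_diff_distrib mult.assoc iSP) (metis iP mult.left_commute mult_1_right)
  also have "\<dots> = fps_X * (C * inverse P - C) * (C * inverse SP)"
    using \<open>SP - P = fps_X * C * (1 - P)\<close> iP by (simp add: right_diff_distrib mult_ac)
  finally have "C * inverse P - C * inverse SP = fps_X * (C * inverse P - C) * (C * inverse SP)" .
  then show "W - fps_dilate fps_X W = fps_X * ((W - fps_const (fps_const c)) * fps_dilate fps_X W)"
    unfolding SW by (simp add: W C_def mult.assoc)
  have "W $ 0 = fps_const c * inverse (1 - fps_const r)"
    by (simp add: W_def)
  also have "1 - fps_const r = fps_const (1 - r)"
    by simp
  finally show "W $ 0 = fps_const (c / (1 - r))"
    by (simp add: fps_const_inverse divide_inverse)
qed

section \<open>Generating functions of words\<close>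

definition word_gen :: "'k::idom \<Rightarrow> letter list \<Rightarrow> 'k ratfun fps fps" where
  "word_gen \<beta> w = Abs_fps (\<lambda>n. phi_D \<beta> n w * inverse (qpoch n))"

\<comment> \<open>For positive w this is the generating function of D w.\<close>
definition word_gen_D :: "'k::idom \<Rightarrow> letter list \<Rightarrow> 'k ratfun fps fps" where
  "word_gen_D \<beta> w =
     (\<Sum>j<length w. fps_const (phi_coeff (rule_coeff \<beta> (w ! j))) * word_gen \<beta> (derive_at w j))"

lemma gen_phi_single_word: "gen_phi \<beta> [(1, w)] c = fps_dilate c (word_gen \<beta> w)"
  by (rule fps_ext) (simp add: gen_phi_def word_gen_def phi_D_def mult_ac)

lemma word_gen_nth_0: "word_gen \<beta> w $ 0 = phi [(1, w)]"
  by (simp add: word_gen_def phi_D_0 qpoch_def)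

lemma word_gen_up:
  "positive_word w \<Longrightarrow> word_gen \<beta> (map up_letter w) = fps_dilate fps_X (word_gen \<beta> w)"
  by (rule fps_ext) (simp add: word_gen_def phi_D_up mult.assoc)

lemma word_gen_q_difference:
  assumes "positive_word w"
  shows "word_gen \<beta> w - fps_dilate fps_X (word_gen \<beta> w) = fps_X * word_gen_D \<beta> w"
proof (rule fps_ext)
  fix n
  show "(word_gen \<beta> w - fps_dilate fps_X (word_gen \<beta> w)) $ n = (fps_X * word_gen_D \<beta> w) $ n"
  proof (cases n)
    case (Suc m)
    have "(word_gen \<beta> w - fps_dilate fps_X (word_gen \<beta> w)) $ n =
        phi_D \<beta> (Suc m) w * ((1 - fps_X ^ Suc m) * inverse (qpoch (Suc m)))"
      by (simp only: fps_q_difference_nth Suc word_gen_def fps_nth_Abs_fps mult.left_commute)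
    also have "\<dots> = (\<Sum>j<length w.
        phi_coeff (rule_coeff \<beta> (w ! j)) * (phi_D \<beta> m (derive_at w j) * inverse (qpoch m)))"
      by (simp only: inverse_qpoch_Suc) (simp add: phi_D_Suc[OF assms] sum_distrib_right mult.assoc)
    also have "\<dots> = (fps_X * word_gen_D \<beta> w) $ n"
      by (simp add: Suc word_gen_D_def word_gen_def fps_sum_nth)
    finally show ?thesis .
  qed simp
qed

lemma sum_lessThan_add: "(\<Sum>j < (a::nat) + b. f j) = (\<Sum>j < a. f j) + (\<Sum>j < b. f (a + j))"
  by (induction b) (simp_all add: add.assoc)

lemma word_gen_D_append_nth:
  assumes IH: "\<And>v w. positive_word v \<Longrightarrow> positive_word w \<Longrightarrow>
      word_gen \<beta> (v @ w) $ n = (word_gen \<beta> v * word_gen \<beta> w) $ n"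
    and v: "positive_word v" and w: "positive_word w"
  shows "word_gen_D \<beta> (v @ w) $ n =
    (word_gen_D \<beta> v * fps_dilate fps_X (word_gen \<beta> w) + word_gen \<beta> v * word_gen_D \<beta> w) $ n"
proof -
  define c where "c l = fps_const (phi_coeff (rule_coeff \<beta> l))" for l
  have "word_gen_D \<beta> (v @ w) =
      (\<Sum>j<length v. c (v ! j) * word_gen \<beta> (derive_at v j @ map up_letter w)) +
      (\<Sum>j<length w. c (w ! j) * word_gen \<beta> (v @ derive_at w j))"
    unfolding word_gen_D_def c_def length_append sum_lessThan_add
    by (simp add: nth_append derive_at_append_left derive_at_append_right)
  also have "\<dots> $ n =
      (\<Sum>j<length v.
         c (v ! j) * (word_gen \<beta> (derive_at v j) * fps_dilate fps_X (word_gen \<beta> w))) $ n +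
      (\<Sum>j<length w. c (w ! j) * (word_gen \<beta> v * word_gen \<beta> (derive_at w j))) $ n"
    using v w by (simp add: c_def fps_sum_nth IH positive_word_derive_at word_gen_up)
  also have "\<dots> =
      (word_gen_D \<beta> v * fps_dilate fps_X (word_gen \<beta> w) + word_gen \<beta> v * word_gen_D \<beta> w) $ n"
    by (simp add: word_gen_D_def c_def sum_distrib_left sum_distrib_right mult_ac)
  finally show ?thesis .
qed

lemma word_gen_append:
  assumes "positive_word v" and "positive_word w"
  shows "word_gen \<beta> (v @ w) = word_gen \<beta> v * word_gen \<beta> w"
proof -
  have "\<forall>v w. positive_word v \<longrightarrow> positive_word w \<longrightarrow>
      word_gen \<beta> (v @ w) $ n = (word_gen \<beta> v * word_gen \<beta> w) $ n" for n
  proof (induction n)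
    case 0
    show ?case by (simp add: word_gen_nth_0 phi_single_append)
  next
    case (Suc n)
    show ?case
    proof (intro allI impI)
      fix v w :: "letter list"
      assume v: "positive_word v" and w: "positive_word w"
      let ?V = "word_gen \<beta> v" and ?W = "word_gen \<beta> w"
      have "(1 - fps_X ^ Suc n) * word_gen \<beta> (v @ w) $ Suc n =
          (word_gen \<beta> (v @ w) - fps_dilate fps_X (word_gen \<beta> (v @ w))) $ Suc n"
        by (rule fps_q_difference_nth[symmetric])
      also have "\<dots> = word_gen_D \<beta> (v @ w) $ n"
        using v w by (simp add: word_gen_q_difference)
      also have "\<dots> = (word_gen_D \<beta> v * fps_dilate fps_X ?W + ?V * word_gen_D \<beta> w) $ n"
        using Suc.IH v w by (intro word_gen_D_append_nth) auto
      also have "\<dots> = (fps_X * (word_gen_D \<beta> v * fps_dilate fps_X ?W + ?V * word_gen_D \<beta> w)) $ Suc n"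
        by simp
      also have "\<dots> =
          ((?V - fps_dilate fps_X ?V) * fps_dilate fps_X ?W + ?V * (?W - fps_dilate fps_X ?W)) $ Suc n"
        by (simp add: word_gen_q_difference v w algebra_simps)
      also have "\<dots> = (?V * ?W - fps_dilate fps_X (?V * ?W)) $ Suc n"
        by (simp add: fps_dilate_mult algebra_simps)
      also have "\<dots> = (1 - fps_X ^ Suc n) * (?V * ?W) $ Suc n"
        by (rule fps_q_difference_nth)
      finally show "word_gen \<beta> (v @ w) $ Suc n = (?V * ?W) $ Suc n"
        using one_minus_fps_X_power_neq_0[of "Suc n"] by simp
    qed
  qed
  with assms show ?thesis
    by (auto intro: fps_ext)
qed

section \<open>The generating functions of the letters of the grammar\<close>

lemma rf_x_neq_0: "rf_x \<noteq> (0 :: 'k::idom ratfun)"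
  by (simp add: rf_x_def Zero_fract_def eq_fract)

lemma rf_x_neq_rf_y: "rf_x \<noteq> (rf_y :: 'k::idom ratfun)"
  by (simp add: rf_x_def rf_y_def eq_fract)

lemma rf_y_over_rf_x_neq_1: "inverse rf_x * rf_y \<noteq> (1 :: 'k::idom ratfun)"
  using rf_x_neq_0 rf_x_neq_rf_y[symmetric] by (auto simp: field_simps)

lemma word_gen_letter_nth_0: "word_gen \<beta> [(s, i, False)] $ 0 = fps_const (cyc_val s)"
  by (simp add: word_gen_nth_0 phi_single_letter)

lemma word_gen_D_letter:
  "word_gen_D \<beta> [l] = fps_const (phi_coeff (rule_coeff \<beta> l)) * word_gen \<beta> (rule_word l)"
  by (simp add: word_gen_D_def derive_at_def)

lemma word_gen_letter_eq:
  assumes "s \<noteq> ME"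
  shows "word_gen \<beta> [(s, i, False)] =
    word_gen \<beta> [(MX, i, False)] + fps_const (fps_const (cyc_val s - rf_x))"
proof -
  define F where "F = word_gen \<beta> [(s, i, False)] - word_gen \<beta> [(MX, i, False)]"
  have "F - fps_dilate fps_X F =
      (word_gen \<beta> [(s, i, False)] - fps_dilate fps_X (word_gen \<beta> [(s, i, False)])) -
      (word_gen \<beta> [(MX, i, False)] - fps_dilate fps_X (word_gen \<beta> [(MX, i, False)]))"
    by (simp add: F_def algebra_simps)
  also have "\<dots> = fps_X * (word_gen_D \<beta> [(s, i, False)] - word_gen_D \<beta> [(MX, i, False)])"
    by (simp add: word_gen_q_difference right_diff_distrib)
  also have "word_gen_D \<beta> [(s, i, False)] = word_gen_D \<beta> [(MX, i, False)]"
    using assms by (cases s) (simp_all add: word_gen_D_letter)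
  finally have "F - fps_dilate fps_X F = 0"
    by simp
  then have "F = fps_const (F $ 0)"
    by (rule q_difference_eq_0_imp_const)
  then show ?thesis
    by (simp add: F_def word_gen_letter_nth_0 cyc_val_def algebra_simps)
qed

lemma word_gen_x0_q_difference:
  fixes \<beta> :: "'k::idom"
  defines "W \<equiv> word_gen \<beta> [(MX, 0, False)]"
  shows "W - fps_dilate fps_X W =
    fps_X * ((W - fps_const (fps_const (rf_x - rf_y))) * fps_dilate fps_X W)"
proof -
  have "word_gen_D \<beta> [(MX, 0, False)] = word_gen \<beta> [(MY, 0, False)] * fps_dilate fps_X W"
    using word_gen_append[of "[(MY, 0, False)]" "map up_letter [(MX, 0, False)]" \<beta>]
      word_gen_up[of "[(MX, 0, False)]" \<beta>]
    by (simp add: word_gen_D_letter phi_coeff_monom W_def)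
  then show ?thesis
    by (simp add: W_def word_gen_q_difference word_gen_letter_eq[of MY] cyc_val_def)
qed

lemma word_gen_x0_closed_form:
  "word_gen \<beta> [(MX, 0, False)] =
     fps_const (fps_const (rf_x - rf_y)) *
       inverse (1 - fps_const (fps_const (inverse rf_x * rf_y)) * eq_exp (fps_const (rf_x - rf_y)))"
  (is "_ = ?W")
proof (rule q_difference_unique[where
    \<Phi> = "\<lambda>F. (F - fps_const (fps_const (rf_x - rf_y))) * fps_dilate fps_X F"])
  note ratio = rf_y_over_rf_x_neq_1[where 'k = 'a]
  show "((F - fps_const (fps_const (rf_x - rf_y))) * fps_dilate fps_X F) $ n =
      ((G - fps_const (fps_const (rf_x - rf_y))) * fps_dilate fps_X G) $ n"
    if "\<And>k. k \<le> n \<Longrightarrow> F $ k = G $ k" for F G :: "'a ratfun fps fps" and n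
    using that by (auto simp: fps_mult_nth intro!: sum.cong)
  show "word_gen \<beta> [(MX, 0, False)] - fps_dilate fps_X (word_gen \<beta> [(MX, 0, False)]) =
      fps_X * ((word_gen \<beta> [(MX, 0, False)] - fps_const (fps_const (rf_x - rf_y))) *
        fps_dilate fps_X (word_gen \<beta> [(MX, 0, False)]))"
    by (rule word_gen_x0_q_difference)
  show "?W - fps_dilate fps_X ?W =
      fps_X * ((?W - fps_const (fps_const (rf_x - rf_y))) * fps_dilate fps_X ?W)"
    using ratio by (rule eq_exp_riccati(1))
  have "(rf_x - rf_y) / (1 - inverse rf_x * rf_y) = (rf_x :: 'a ratfun)"
    using rf_x_neq_0 ratio by (auto simp: field_simps)
  then show "word_gen \<beta> [(MX, 0, False)] $ 0 = ?W $ 0"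
    by (simp only: eq_exp_riccati(2)[OF ratio] word_gen_letter_nth_0 cyc_val_def mvar.case)
qed

lemma word_gen_z1:
  "word_gen \<beta> [(MZ, 1, False)] =
     fps_dilate fps_X (word_gen \<beta> [(MX, 0, False)]) + fps_const (fps_const (rf_z - rf_x))"
  using word_gen_up[of "[(MZ, 0, False)]" \<beta>]
  by (simp add: word_gen_letter_eq[of MZ] cyc_val_def)

lemma gen_phi_z1_closed_form:
  fixes \<beta> :: "'k::idom"
  shows "gen_phi \<beta> [(1, [(MZ, 1, False)])] (fps_X ^ k) =
     (fps_const (fps_const (rf_z - rf_y)) +
      fps_const (fps_const (inverse rf_x * rf_y * (rf_x - rf_z))) *
        eq_exp (fps_const (rf_x - rf_y) * fps_X ^ (Suc k)))
     * inverse (1 - fps_const (fps_const (inverse rf_x * rf_y)) *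
        eq_exp (fps_const (rf_x - rf_y) * fps_X ^ (Suc k)))"
proof -
  define E :: "'k ratfun fps fps" where "E = eq_exp (fps_const (rf_x - rf_y) * fps_X ^ Suc k)"
  define Q where "Q = 1 - fps_const (fps_const (inverse rf_x * rf_y)) * E"
  have Q0: "(1 - fps_const (fps_const (inverse rf_x * rf_y)) *
      eq_exp (fps_const (rf_x - rf_y :: 'k ratfun))) $ 0 $ 0 \<noteq> 0"
    using rf_y_over_rf_x_neq_1 by simp
  have "Q $ 0 $ 0 \<noteq> 0"
    using rf_y_over_rf_x_neq_1 by (simp add: Q_def E_def)
  then have Q: "Q * inverse Q = 1"
    by (rule fps_fps_mult_inverse)
  have "gen_phi \<beta> [(1, [(MZ, 1, False)])] (fps_X ^ k) =
      fps_dilate (fps_X ^ Suc k) (word_gen \<beta> [(MX, 0, False)]) +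
        fps_const (fps_const (rf_z - rf_x))"
    by (simp only: gen_phi_single_word word_gen_z1) (simp add: fps_dilate_dilate mult.commute)
  also have "fps_dilate (fps_X ^ Suc k) (word_gen \<beta> [(MX, 0, False)]) =
      fps_const (fps_const (rf_x - rf_y)) * inverse Q"
    by (simp add: word_gen_x0_closed_form fps_dilate_mult fps_dilate_inverse[OF Q0]
        fps_dilate_eq_exp Q_def E_def)
  also have "fps_const (fps_const (rf_x - rf_y)) * inverse Q + fps_const (fps_const (rf_z - rf_x)) =
      (fps_const (fps_const (rf_x - rf_y)) + fps_const (fps_const (rf_z - rf_x)) * Q) * inverse Q"
    by (simp add: distrib_right mult.assoc Q)
  also have "fps_const (fps_const (rf_x - rf_y)) + fps_const (fps_const (rf_z - rf_x)) * Q =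
      fps_const (fps_const (rf_z - rf_y)) +
        fps_const (fps_const (inverse rf_x * rf_y * (rf_x - rf_z))) * E"
    by (simp add: Q_def algebra_simps) (simp only: distrib_left[symmetric] fps_const_add, simp)
  finally show ?thesis
    by (simp only: Q_def E_def)
qed

lemma word_gen_e0_q_difference:
  "word_gen \<beta> [(ME, 0, False)] - fps_dilate fps_X (word_gen \<beta> [(ME, 0, False)]) =
     fps_X * fps_const (fps_const (rf_const \<beta>)) *
       word_gen \<beta> [(ME, 0, False)] * word_gen \<beta> [(MZ, 1, False)]"
  using word_gen_append[of "[(ME, 0, False)]" "[(MZ, 1, False)]" \<beta>]
  by (simp add: word_gen_q_difference word_gen_D_letter phi_coeff_monom mult.assoc)

definition cyc_factor :: "'k::idom \<Rightarrow> nat \<Rightarrow> 'k ratfun fps fps" where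
  "cyc_factor \<beta> k =
     1 - fps_const (fps_const (rf_const \<beta>) * fps_X ^ k) * fps_X *
       gen_phi \<beta> [(1, [(MZ, 1, False)])] (fps_X ^ k)"

lemma cyc_factor_mult_inverse: "cyc_factor \<beta> k * inverse (cyc_factor \<beta> k) = 1"
  by (rule fps_fps_mult_inverse) (simp add: cyc_factor_def)

lemma fps_dilate_word_gen_e0_Suc:
  "fps_dilate (fps_X ^ Suc k) (word_gen \<beta> [(ME, 0, False)]) =
     fps_dilate (fps_X ^ k) (word_gen \<beta> [(ME, 0, False)]) * cyc_factor \<beta> k"
proof -
  let ?E = "word_gen \<beta> [(ME, 0, False)]" and ?Z = "word_gen \<beta> [(MZ, 1, False)]"
  have "fps_dilate fps_X ?E = ?E * (1 - fps_X * fps_const (fps_const (rf_const \<beta>)) * ?Z)"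
    using word_gen_e0_q_difference[of \<beta>] by (simp add: algebra_simps)
  then have "fps_dilate (fps_X ^ k) (fps_dilate fps_X ?E) = fps_dilate (fps_X ^ k) ?E *
      (1 - fps_const (fps_X ^ k) * fps_X * fps_const (fps_const (rf_const \<beta>)) *
        fps_dilate (fps_X ^ k) ?Z)"
    by (simp add: fps_dilate_mult)
  then show ?thesis
    by (simp add: fps_dilate_dilate power_Suc2 cyc_factor_def gen_phi_single_word mult_ac)
qed

lemma word_gen_e0_factorization:
  "word_gen \<beta> [(ME, 0, False)] =
     fps_dilate (fps_X ^ N) (word_gen \<beta> [(ME, 0, False)]) * (\<Prod>k<N. inverse (cyc_factor \<beta> k))"
proof (induction N)
  case (Suc N)
  have "fps_dilate (fps_X ^ N) (word_gen \<beta> [(ME, 0, False)]) =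
      fps_dilate (fps_X ^ Suc N) (word_gen \<beta> [(ME, 0, False)]) * inverse (cyc_factor \<beta> N)"
    by (simp only: fps_dilate_word_gen_e0_Suc mult.assoc cyc_factor_mult_inverse mult_1_right)
  with Suc.IH show ?case
    by (simp add: mult_ac)
qed simp

theorem theorem5p9:
  fixes \<beta> :: "'k::{idom, ring_char_0}"
  shows "(\<forall>k::nat.
            gen_phi \<beta> [(1, [(MZ, 1, False)])] (fps_X ^ k) =
              (fps_const (fps_const (rf_z - rf_y)) +
               fps_const (fps_const (inverse rf_x * rf_y * (rf_x - rf_z))) *
                 eq_exp (fps_const (rf_x - rf_y) * fps_X ^ (Suc k)))
              * inverse (1 - fps_const (fps_const (inverse rf_x * rf_y)) *
                 eq_exp (fps_const (rf_x - rf_y) * fps_X ^ (Suc k))))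
       \<and> (\<forall>n::nat.
            (\<lambda>N. fps_nth (fps_const (fps_const rf_e) *
                    (\<Prod>k<N. inverse (1 - fps_const (fps_const (rf_const \<beta>) * fps_X ^ k) * fps_X *
                                        gen_phi \<beta> [(1, [(MZ, 1, False)])] (fps_X ^ k)))) n)
            \<longlonglongrightarrow> fps_nth (gen_phi \<beta> [(1, [(ME, 0, False)])] 1) n)"
proof -
  have "word_gen \<beta> [(ME, 0, False)] $ 0 = fps_const rf_e"
    by (simp add: word_gen_letter_nth_0 cyc_val_def)
  then have "(\<lambda>N. (fps_const (fps_const rf_e) * (\<Prod>k<N. inverse (cyc_factor \<beta> k))) $ n)
      \<longlonglongrightarrow> gen_phi \<beta> [(1, [(ME, 0, False)])] 1 $ n" for n
    using tendsto_fps_nth_dilate_factorization[OF word_gen_e0_factorization, of \<beta> n]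
    by (simp only: gen_phi_single_word fps_dilate_by_1)
  then show ?thesis
    unfolding cyc_factor_def using gen_phi_z1_closed_form by blast
qed

end
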